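(* For a length-$N$ steganographic code subject to distortion $D$ with zero probability of error (for any $\varepsilon>0$, $P(\phi_N(X^N,K)\ne M)\le\varepsilon$), the unicity distance $n_0$ for known-cover extracting attack and the unicity distance $n_1$ for stego-only extracting attack satisfy, for any given $\varepsilon>0$, \[ n_1\ \ge\ n_0\ \ge\ \frac{R_k}{C(D)-R_m+\varepsilon}, \] where $C(D)=\max_{q(x|\widetilde{x})\in Q}H(X|\widetilde{X})$ is the hiding capacity, $R_m=H(M)/N$ is the message rate and $R_k=H(K)/N$ is the key rate.
   Context: Model. $\mathcal{X}$ is a finite alphabet, $\mathcal{K}$ a finite key set. A distortion function is $d:\mathcal{X}\times\mathcal{X}\to[0,\infty)$, extended to $N$-tuples by averaging. A length-$N$ steganographic code subject to distortion $D$ is a triple $(\mathcal{M},f_N,\phi_N)$ with finite message set $\mathcal{M}$, embedding map $f_N:\mathcal{X}^N\times\mathcal{M}\times\mathcal{K}\to\mathcal{X}^N$ whose average distortion (averaged over cover distribution, uniform message and uniform key) is at most $D$, and extraction map $\phi_N(x^N,k)\in\mathcal{M}$. The cover $\widetilde{X}^N$ is i.i.d. from $P(\widetilde{x})$; the message $M$ is uniform and independent of the cover; the key $K$ is independent of message and cover; $X^N=f_N(\widetilde{X}^N,M,K)$. Admissible cover channels: $Q=\{q(x|\widetilde{x}):\sum_{\widetilde{x},x}d(\widetilde{x},x)q(x|\widetilde{x})P(\widetilde{x})\le D\}$, acting memorylessly on $N$-tuples. In an $n$-fold use, $n$ i.i.d. covers and messages are embedded with the same key. Given $n$ observed pairs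 of cover/stego objects, a key $k$ is possible if there is a message sequence of positive probability which, embedded with $k$ into the observed covers, yields the observed stego objects; the expected number of spurious keys $\overline{S}_n$ is the expectation of (number of possible keys $-1$). The unicity distance $n_0$ (known-cover attack) is the minimum number of cover/stego pairs with which the expected number of spurious stego keys equals zero; the unicity distance $n_1$ (stego-only attack) is the minimum number of stego objects with which the expected number of spurious stego keys equals zero (where possible keys are those consistent with the stego objects alone). Entropies are in bits. *)

theory Defs
  imports Complex_Main
begin

(* Entropy (in bits) of a finitely supported distribution p on the finite set A,
   with the convention 0 log 0 = 0 (automatic, since 0 * _ = 0). *)
definition entropy :: "('a \<Rightarrow> real) \<Rightarrow> 'a set \<Rightarrow> real" where
  "entropy p A = - (\<Sum>a\<in>A. p a * log 2 (p a))"

definition unif :: "'a::finite \<Rightarrow> real" where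
  "unif (a::'a::finite) = 1 / real (card (UNIV :: 'a set))"

definition tuples :: "nat \<Rightarrow> 'a list set" where
  "tuples N = {xs. length xs = N}"

definition prodP :: "('x \<Rightarrow> real) \<Rightarrow> 'x list \<Rightarrow> real" where
  "prodP P xs = prod_list (map P xs)"

definition distN :: "('x \<Rightarrow> 'x \<Rightarrow> real) \<Rightarrow> 'x list \<Rightarrow> 'x list \<Rightarrow> real" where
  "distN d xs ys = (\<Sum>i<length xs. d (xs ! i) (ys ! i)) / real (length xs)"

definition avg_distortion ::
  "nat \<Rightarrow> ('x::finite \<Rightarrow> real) \<Rightarrow> ('x \<Rightarrow> 'x \<Rightarrow> real) \<Rightarrow>
   ('x list \<Rightarrow> 'm::finite \<Rightarrow> 'k::finite \<Rightarrow> 'x list) \<Rightarrow> real" where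
  "avg_distortion N P d f =
     (\<Sum>c\<in>tuples N. \<Sum>m\<in>UNIV. \<Sum>k\<in>UNIV.
        prodP P c * unif m * unif k * distN d c (f c m k))"

definition err_prob ::
  "nat \<Rightarrow> ('x::finite \<Rightarrow> real) \<Rightarrow>
   ('x list \<Rightarrow> 'm::finite \<Rightarrow> 'k::finite \<Rightarrow> 'x list) \<Rightarrow> ('x list \<Rightarrow> 'k \<Rightarrow> 'm) \<Rightarrow> real" where
  "err_prob N P f phi =
     (\<Sum>c\<in>tuples N. \<Sum>m\<in>UNIV. \<Sum>k\<in>UNIV.
        prodP P c * unif m * unif k * (if phi (f c m k) k \<noteq> m then 1 else 0))"

definition stego_code ::
  "nat \<Rightarrow> ('x::finite \<Rightarrow> real) \<Rightarrow> ('x \<Rightarrow> 'x \<Rightarrow> real) \<Rightarrow> real \<Rightarrow>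
   ('x list \<Rightarrow> 'm::finite \<Rightarrow> 'k::finite \<Rightarrow> 'x list) \<Rightarrow> ('x list \<Rightarrow> 'k \<Rightarrow> 'm) \<Rightarrow> bool" where
  "stego_code N P d D f phi \<longleftrightarrow>
     (\<forall>c m k. length c = N \<longrightarrow> length (f c m k) = N) \<and>
     avg_distortion N P d f \<le> D"

(* admissible cover channels q(x | xt) = q xt x *)
definition admissible :: "('x::finite \<Rightarrow> real) \<Rightarrow> ('x \<Rightarrow> 'x \<Rightarrow> real) \<Rightarrow> real \<Rightarrow> ('x \<Rightarrow> 'x \<Rightarrow> real) set" where
  "admissible P d D =
     {q. (\<forall>xt x. 0 \<le> q xt x) \<and> (\<forall>xt. (\<Sum>x\<in>UNIV. q xt x) = 1) \<and>
         (\<Sum>xt\<in>UNIV. \<Sum>x\<in>UNIV. d xt x * q xt x * P xt) \<le> D}"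

definition cond_entropy :: "('x::finite \<Rightarrow> real) \<Rightarrow> ('x \<Rightarrow> 'x \<Rightarrow> real) \<Rightarrow> real" where
  "cond_entropy P q = - (\<Sum>xt\<in>UNIV. \<Sum>x\<in>UNIV. P xt * q xt x * log 2 (q xt x))"

definition hiding_capacity :: "('x::finite \<Rightarrow> real) \<Rightarrow> ('x \<Rightarrow> 'x \<Rightarrow> real) \<Rightarrow> real \<Rightarrow> real" where
  "hiding_capacity P d D = (SUP q\<in>admissible P d D. cond_entropy P q)"

definition stegos :: "('x list \<Rightarrow> 'm \<Rightarrow> 'k \<Rightarrow> 'x list) \<Rightarrow> 'x list list \<Rightarrow> 'm list \<Rightarrow> 'k \<Rightarrow> 'x list list" where
  "stegos f cs ms k = map2 (\<lambda>c m. f c m k) cs ms"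

(* possible keys, known-cover attack: some message sequence (all have positive
   probability, messages being uniform) embedded with k' into the observed covers
   gives the observed stego objects *)
definition poss_keys_kc ::
  "('x list \<Rightarrow> 'm \<Rightarrow> 'k \<Rightarrow> 'x list) \<Rightarrow> 'x list list \<Rightarrow> 'x list list \<Rightarrow> 'k set" where
  "poss_keys_kc f cs ss =
     {k'. \<exists>ms'. length ms' = length cs \<and> stegos f cs ms' k' = ss}"

definition poss_keys_so ::
  "nat \<Rightarrow> ('x \<Rightarrow> real) \<Rightarrow> ('x list \<Rightarrow> 'm \<Rightarrow> 'k \<Rightarrow> 'x list) \<Rightarrow> 'x list list \<Rightarrow> 'k set" where
  "poss_keys_so N P f ss =
     {k'. \<exists>cs' ms'. length cs' = length ss \<and> length ms' = length ss \<and>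
          (\<forall>c\<in>set cs'. length c = N \<and> prodP P c > 0) \<and> stegos f cs' ms' k' = ss}"

definition spurious_kc ::
  "nat \<Rightarrow> ('x::finite \<Rightarrow> real) \<Rightarrow> ('x list \<Rightarrow> 'm::finite \<Rightarrow> 'k::finite \<Rightarrow> 'x list) \<Rightarrow> nat \<Rightarrow> real" where
  "spurious_kc N P f n =
     (\<Sum>cs\<in>{cs. length cs = n \<and> (\<forall>c\<in>set cs. c \<in> tuples N)}.
      \<Sum>ms\<in>{ms::'m list. length ms = n}. \<Sum>k\<in>UNIV.
        prod_list (map (prodP P) cs) * prod_list (map unif ms) * unif k *
        (real (card (poss_keys_kc f cs (stegos f cs ms k))) - 1))"

definition spurious_so ::
  "nat \<Rightarrow> ('x::finite \<Rightarrow> real) \<Rightarrow> ('x list \<Rightarrow> 'm::finite \<Rightarrow> 'k::finite \<Rightarrow> 'x list) \<Rightarrow> nat \<Rightarrow> real" where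
  "spurious_so N P f n =
     (\<Sum>cs\<in>{cs. length cs = n \<and> (\<forall>c\<in>set cs. c \<in> tuples N)}.
      \<Sum>ms\<in>{ms::'m list. length ms = n}. \<Sum>k\<in>UNIV.
        prod_list (map (prodP P) cs) * prod_list (map unif ms) * unif k *
        (real (card (poss_keys_so N P f (stegos f cs ms k))) - 1))"

definition unicity_kc :: "nat \<Rightarrow> ('x::finite \<Rightarrow> real) \<Rightarrow> ('x list \<Rightarrow> 'm::finite \<Rightarrow> 'k::finite \<Rightarrow> 'x list) \<Rightarrow> nat" where
  "unicity_kc N P f = (LEAST n. spurious_kc N P f n = 0)"

definition unicity_so :: "nat \<Rightarrow> ('x::finite \<Rightarrow> real) \<Rightarrow> ('x list \<Rightarrow> 'm::finite \<Rightarrow> 'k::finite \<Rightarrow> 'x list) \<Rightarrow> nat" where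
  "unicity_so N P f = (LEAST n. spurious_so N P f n = 0)"

end

theory Submission
  imports Defs "HOL-Library.Cardinality"
begin

(* Zero error forces phi to decode correctly on every cover of positive probability, and the absence
   of spurious keys after n = n0 uses forces the key consistent with the known covers to be unique.
   Hence, for every cover sequence of positive probability, the |M|^n |K| choices of messages and key
   give pairwise distinct stego sequences.  A memoryless channel assigns these sequences total
   probability at most one, so by Gibbs' inequality their average log-likelihood is at most
   -log (|M|^n |K|).  For the channel q(x | xt) derived from the joint law of cover and stego letter
   at a uniformly random position, this average log-likelihood equals -n N H(X | Xt); as q meets the
   distortion constraint, H(X | Xt) <= C(D), and n log |M| + log |K| <= n N C(D) rearranges to the
   bound on n0.  A key consistent with the known covers is also consistent with the stego objects
   alone, so spurious keys can only become more numerous in the stego-only attack, and n1 >= n0. *)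

section \<open>Sums over lists and elementary inequalities\<close>

lemma sum_lists_prod_nth:
  fixes F :: "nat \<Rightarrow> 'a \<Rightarrow> 'b::comm_semiring_1"
  assumes "finite A"
  shows "(\<Sum>xs\<in>{xs. set xs \<subseteq> A \<and> length xs = n}. \<Prod>i<n. F i (xs ! i)) = (\<Prod>i<n. \<Sum>a\<in>A. F i a)"
proof (induction n arbitrary: F)
  case 0
  have "{xs. set xs \<subseteq> A \<and> length xs = 0} = {[]}" by auto
  then show ?case by simp
next
  case (Suc n)
  have "(\<Sum>xs\<in>{xs. set xs \<subseteq> A \<and> length xs = Suc n}. \<Prod>i<Suc n. F i (xs ! i))
      = (\<Sum>(xs, a)\<in>{xs. set xs \<subseteq> A \<and> length xs = n} \<times> A. F 0 a * (\<Prod>i<n. F (Suc i) (xs ! i)))"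
    unfolding lists_length_Suc_eq
    by (subst sum.reindex[OF inj_split_Cons])
      (simp add: case_prod_unfold prod.lessThan_Suc_shift del: prod.lessThan_Suc)
  also have "\<dots> = (\<Sum>a\<in>A. F 0 a) * (\<Prod>i<n. \<Sum>a\<in>A. F (Suc i) a)"
    by (simp add: sum.cartesian_product[symmetric] sum_product sum.swap[of _ A]
        Suc.IH[of "\<lambda>i. F (Suc i)", symmetric])
  finally show ?case
    by (simp add: prod.lessThan_Suc_shift del: prod.lessThan_Suc)
qed

lemma prod_list_map_conv_prod_nth: "prod_list (map p xs) = (\<Prod>i<length xs. p (xs ! i))"
  by (induction xs) (simp_all add: prod.lessThan_Suc_shift del: prod.lessThan_Suc)

lemma sum_lists_prod_list:
  fixes p :: "'a \<Rightarrow> 'b::comm_semiring_1"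
  assumes "finite A"
  shows "(\<Sum>xs\<in>{xs. set xs \<subseteq> A \<and> length xs = n}. prod_list (map p xs)) = sum p A ^ n"
proof -
  have "(\<Sum>xs\<in>{xs. set xs \<subseteq> A \<and> length xs = n}. prod_list (map p xs))
      = (\<Sum>xs\<in>{xs. set xs \<subseteq> A \<and> length xs = n}. \<Prod>i<n. p (xs ! i))"
    by (intro sum.cong) (auto simp: prod_list_map_conv_prod_nth)
  also have "\<dots> = (\<Prod>i<n. sum p A)"
    by (rule sum_lists_prod_nth[OF assms])
  finally show ?thesis by simp
qed

lemma sum_lists_prod_list_mult_nth:
  fixes p :: "'a \<Rightarrow> 'b::comm_semiring_1"
  assumes "finite A" "i < n"
  shows "(\<Sum>xs\<in>{xs. set xs \<subseteq> A \<and> length xs = n}. prod_list (map p xs) * h (xs ! i))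
       = (\<Sum>a\<in>A. p a * h a) * sum p A ^ (n - 1)"
proof -
  have "prod_list (map p xs) * h (xs ! i) = (\<Prod>j<n. p (xs ! j) * (if j = i then h (xs ! j) else 1))"
    if "length xs = n" for xs
    using that assms(2) by (simp add: prod_list_map_conv_prod_nth prod.distrib)
  then have "(\<Sum>xs\<in>{xs. set xs \<subseteq> A \<and> length xs = n}. prod_list (map p xs) * h (xs ! i))
      = (\<Sum>xs\<in>{xs. set xs \<subseteq> A \<and> length xs = n}.
           \<Prod>j<n. p (xs ! j) * (if j = i then h (xs ! j) else 1))"
    by (intro sum.cong) auto
  also have "\<dots> = (\<Prod>j<n. \<Sum>a\<in>A. p a * (if j = i then h a else 1))"
    by (rule sum_lists_prod_nth[OF assms(1)])
  also have "\<dots> = (\<Prod>j<n. if j = i then (\<Sum>a\<in>A. p a * h a) else sum p A)"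
    by (intro prod.cong) auto
  also have "\<dots> = (\<Sum>a\<in>A. p a * h a) * sum p A ^ (n - 1)"
    using assms(2) by (simp add: prod_gen_delta)
  finally show ?thesis .
qed

lemma member_le_sum3:
  fixes F :: "'a \<Rightarrow> 'b \<Rightarrow> 'c \<Rightarrow> 'd::{semiring_1, ordered_comm_monoid_add}"
  assumes "finite A" "finite B" "finite C"
    and "\<And>a b c. a \<in> A \<Longrightarrow> b \<in> B \<Longrightarrow> c \<in> C \<Longrightarrow> 0 \<le> F a b c"
    and "a \<in> A" "b \<in> B" "c \<in> C"
  shows "F a b c \<le> (\<Sum>a\<in>A. \<Sum>b\<in>B. \<Sum>c\<in>C. F a b c)"
proof -
  have "F a b c \<le> (\<Sum>c\<in>C. F a b c)"
    using assms by (intro member_le_sum) auto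
  also have "\<dots> \<le> (\<Sum>b\<in>B. \<Sum>c\<in>C. F a b c)"
    using assms by (intro member_le_sum sum_nonneg) auto
  also have "\<dots> \<le> (\<Sum>a\<in>A. \<Sum>b\<in>B. \<Sum>c\<in>C. F a b c)"
    using assms by (intro member_le_sum sum_nonneg) auto
  finally show ?thesis .
qed

lemma prod_list_pos_imp_mem_pos:
  fixes xs :: "'a::linordered_idom list"
  assumes "\<forall>x\<in>set xs. 0 \<le> x" "0 < prod_list xs" "x \<in> set xs"
  shows "0 < x"
proof -
  have "0 \<notin> set xs" using assms(2) prod_list_zero_iff[of xs] by auto
  then show ?thesis using assms(1,3) by (metis order_le_less)
qed

lemma sum_mult_card_pairs:
  fixes G :: "'a::finite \<Rightarrow> 'b::finite \<Rightarrow> real"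
  assumes "finite J"
  shows "(\<Sum>a\<in>UNIV. \<Sum>b\<in>UNIV. G a b * real (card {j\<in>J. u j = a \<and> v j = b})) = (\<Sum>j\<in>J. G (u j) (v j))"
proof -
  have "real (card {j\<in>J. u j = a \<and> v j = b}) = (\<Sum>j\<in>J. of_bool (u j = a \<and> v j = b))" for a b
    using assms by (simp add: Int_def conj_commute)
  then have "(\<Sum>a\<in>UNIV. \<Sum>b\<in>UNIV. G a b * real (card {j\<in>J. u j = a \<and> v j = b}))
      = (\<Sum>j\<in>J. \<Sum>a\<in>UNIV. \<Sum>b\<in>UNIV. G a b * of_bool (u j = a \<and> v j = b))"
    by (simp add: sum_distrib_left sum.swap[of _ J])
  also have "\<dots> = (\<Sum>j\<in>J. G (u j) (v j))"
  proof (rule sum.cong[OF refl])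
    fix j
    have "(\<Sum>a\<in>UNIV. \<Sum>b\<in>UNIV. G a b * of_bool (u j = a \<and> v j = b))
        = (\<Sum>a\<in>UNIV. if u j = a then G a (v j) else 0)"
      by (intro sum.cong) (auto simp: sum.delta)
    then show "(\<Sum>a\<in>UNIV. \<Sum>b\<in>UNIV. G a b * of_bool (u j = a \<and> v j = b)) = G (u j) (v j)"
      by simp
  qed
  finally show ?thesis .
qed

lemma ln_prod_prod:
  fixes x :: "'a \<Rightarrow> 'b \<Rightarrow> real"
  assumes "finite I" "finite J" "\<And>i j. i \<in> I \<Longrightarrow> j \<in> J \<Longrightarrow> 0 < x i j"
  shows "ln (\<Prod>i\<in>I. \<Prod>j\<in>J. x i j) = (\<Sum>i\<in>I. \<Sum>j\<in>J. ln (x i j))"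
proof -
  have "ln (\<Prod>i\<in>I. \<Prod>j\<in>J. x i j) = (\<Sum>i\<in>I. ln (\<Prod>j\<in>J. x i j))"
    using assms by (intro ln_prod) (auto simp: less_imp_neq[symmetric])
  also have "\<dots> = (\<Sum>i\<in>I. \<Sum>j\<in>J. ln (x i j))"
    using assms by (intro sum.cong refl ln_prod) (auto simp: less_imp_neq[symmetric])
  finally show ?thesis .
qed

lemma gibbs_inequality_uniform:
  fixes p :: "'a \<Rightarrow> real"
  assumes "finite Z" "\<And>z. z \<in> Z \<Longrightarrow> 0 < p z" "sum p Z \<le> 1"
  shows "(\<Sum>z\<in>Z. ln (p z)) \<le> - real (card Z) * ln (real (card Z))"
proof (cases "Z = {}")
  case False
  define W where "W = real (card Z)"
  have "W > 0" using assms(1) False by (simp add: W_def card_gt_0_iff)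
  have "ln W + ln (p z) \<le> W * p z - 1" if "z \<in> Z" for z
    using ln_le_minus_one[of "W * p z"] assms(2)[OF that] \<open>W > 0\<close> by (simp add: ln_mult)
  then have "(\<Sum>z\<in>Z. ln W + ln (p z)) \<le> (\<Sum>z\<in>Z. W * p z - 1)"
    by (rule sum_mono)
  also have "\<dots> = W * (sum p Z - 1)"
    by (simp add: sum_subtractf sum_distrib_left right_diff_distrib W_def)
  also have "\<dots> \<le> 0"
    using \<open>W > 0\<close> assms(3) by (simp add: mult_nonneg_nonpos)
  finally show ?thesis by (simp add: sum.distrib sum_distrib_right W_def)
qed simp

lemma neg_mult_ln_le_one:
  assumes "0 \<le> x"
  shows "- (x * ln x) \<le> (1::real)"
proof (cases "x = 0")
  case False
  then have "0 < x" using assms by simp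
  have "- ln x \<le> 1 / x - 1"
    using ln_le_minus_one[of "1 / x"] \<open>0 < x\<close> by (simp add: ln_div)
  then have "x * (- ln x) \<le> x * (1 / x - 1)"
    using assms by (rule mult_left_mono)
  also have "\<dots> = 1 - x"
    using \<open>0 < x\<close> by (simp add: field_simps)
  finally show ?thesis using assms by simp
qed simp

lemma rate_ratio_le:
  fixes a b C \<epsilon> n N :: real
  assumes "0 \<le> a" "0 \<le> n" "0 < N" "0 < \<epsilon>" "n * b + a \<le> n * N * C"
  shows "(a / N) / (C - b / N + \<epsilon>) \<le> n"
proof (cases "0 < C - b / N + \<epsilon>")
  case True
  have "a / N \<le> n * (C - b / N)"
    using assms(3,5) by (simp add: field_simps)
  also have "\<dots> \<le> n * (C - b / N + \<epsilon>)"
    using assms(2,4) by (simp add: mult_left_mono)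
  finally have "a / N \<le> n * (C - b / N + \<epsilon>)" .
  then show ?thesis
    using True by (subst pos_divide_le_eq) simp_all
next
  case False
  then have "(a / N) / (C - b / N + \<epsilon>) \<le> 0"
    using assms(1,3) by (intro divide_nonneg_nonpos) auto
  with assms(2) show ?thesis by linarith
qed

section \<open>Expectations over uses of a stego code\<close>

lemma unif_pos: "0 < unif (a::'a::finite)"
  by (simp add: unif_def)

lemma sum_unif: "(\<Sum>a\<in>UNIV. unif (a::'a::finite)) = 1"
  by (simp add: unif_def)

lemma prod_list_map_unif:
  "prod_list (map unif (xs::'a::finite list)) = 1 / real CARD('a) ^ length xs"
  by (induction xs) (simp_all add: unif_def)

lemma entropy_unif: "entropy (unif :: 'a::finite \<Rightarrow> real) UNIV = log 2 (real CARD('a))"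
  by (simp add: entropy_def unif_def log_divide)

lemma finite_tuples: "finite (tuples N :: 'a::finite list set)"
  using finite_lists_length_eq[of "UNIV :: 'a set" N] by (simp add: tuples_def)

lemma finite_lists_of_length: "finite {xs::'a::finite list. length xs = n}"
  using finite_lists_length_eq[of "UNIV :: 'a set" n] by simp

lemma lists_of_tuples_eq:
  "{cs. length cs = n \<and> (\<forall>c\<in>set cs. c \<in> tuples N)} = {cs. set cs \<subseteq> tuples N \<and> length cs = n}"
  by auto

lemma prodP_nonneg: "\<forall>x. 0 \<le> P x \<Longrightarrow> 0 \<le> prodP P c"
  unfolding prodP_def by (rule prod_list_nonneg) auto

lemma sum_prodP: "(\<Sum>x\<in>UNIV. P x) = 1 \<Longrightarrow> (\<Sum>c\<in>tuples N. prodP P (c::'x::finite list)) = 1"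
  using sum_lists_prod_list[of "UNIV :: 'x set" P N] by (simp add: tuples_def prodP_def)

lemma sum_prodP_mult_nth:
  assumes "(\<Sum>x\<in>UNIV. P x) = 1" "j < N"
  shows "(\<Sum>c\<in>tuples N. prodP P (c::'x::finite list) * h (c ! j)) = (\<Sum>x\<in>UNIV. P x * h x)"
  using assms sum_lists_prod_list_mult_nth[of "UNIV :: 'x set" j N P h]
  by (simp add: tuples_def prodP_def)

lemma prodP_pos_nth: "\<forall>x. 0 \<le> P x \<Longrightarrow> 0 < prodP P c \<Longrightarrow> j < length c \<Longrightarrow> 0 < P (c ! j)"
  unfolding prodP_def by (rule prod_list_pos_imp_mem_pos) auto

lemma prod_list_prodP_nonneg: "\<forall>x. 0 \<le> P x \<Longrightarrow> 0 \<le> prod_list (map (prodP P) cs)"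
  by (rule prod_list_nonneg) (auto simp: prodP_nonneg)

lemma prodP_pos_of_prod_list_pos:
  "\<forall>x. 0 \<le> P x \<Longrightarrow> 0 < prod_list (map (prodP P) cs) \<Longrightarrow> c \<in> set cs \<Longrightarrow> 0 < prodP P c"
  by (rule prod_list_pos_imp_mem_pos[of "map (prodP P) cs"]) (auto simp: prodP_nonneg)

definition single_use_expectation ::
  "nat \<Rightarrow> ('x::finite \<Rightarrow> real) \<Rightarrow> ('x list \<Rightarrow> 'm::finite \<Rightarrow> 'k::finite \<Rightarrow> real) \<Rightarrow> real" where
  "single_use_expectation N P g =
     (\<Sum>c\<in>tuples N. \<Sum>m\<in>UNIV. \<Sum>k\<in>UNIV. prodP P c * unif m * unif k * g c m k)"

lemma single_use_expectation_sum:
  "finite A \<Longrightarrow>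
   single_use_expectation N P (\<lambda>c m k. \<Sum>a\<in>A. g a c m k) = (\<Sum>a\<in>A. single_use_expectation N P (g a))"
  unfolding single_use_expectation_def sum_distrib_left
  by (simp add: sum.swap[of _ A])

lemma single_use_expectation_cmult:
  "single_use_expectation N P (\<lambda>c m k. r * g c m k) = r * single_use_expectation N P g"
  unfolding single_use_expectation_def sum_distrib_left by (simp add: ac_simps)

lemma single_use_expectation_cover:
  "single_use_expectation N P (\<lambda>c (m::'m::finite) (k::'k::finite). g c)
   = (\<Sum>c\<in>tuples N. prodP P c * g c)"
proof -
  have "(\<Sum>m\<in>UNIV. \<Sum>k\<in>UNIV. prodP P c * unif (m::'m) * unif (k::'k) * g c) = prodP P c * g c" for c
    using sum_unif[where 'a='m] sum_unif[where 'a='k]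
    by (simp add: sum_distrib_left[symmetric] sum_distrib_right[symmetric] ac_simps)
  then show ?thesis by (simp add: single_use_expectation_def)
qed

lemma single_use_expectation_cong:
  "(\<And>c m k. c \<in> tuples N \<Longrightarrow> g c m k = g' c m k) \<Longrightarrow>
   single_use_expectation N P g = single_use_expectation N P g'"
  by (simp add: single_use_expectation_def)

lemma single_use_expectation_nonneg:
  "\<forall>x. 0 \<le> P x \<Longrightarrow> (\<And>c m k. 0 \<le> g c m k) \<Longrightarrow> 0 \<le> single_use_expectation N P g"
  unfolding single_use_expectation_def
  by (intro sum_nonneg mult_nonneg_nonneg prodP_nonneg less_imp_le[OF unif_pos]) auto

lemma single_use_expectation_term_le:
  assumes "\<forall>x. 0 \<le> P x" "\<And>c m k. 0 \<le> g c m k" "c \<in> tuples N"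
  shows "prodP P c * unif m * unif k * g c m k \<le> single_use_expectation N P g"
  unfolding single_use_expectation_def using assms
  by (intro member_le_sum3 finite_tuples mult_nonneg_nonneg prodP_nonneg less_imp_le[OF unif_pos])
    auto

definition multi_use_expectation ::
  "nat \<Rightarrow> ('x::finite \<Rightarrow> real) \<Rightarrow> nat \<Rightarrow>
   ('x list list \<Rightarrow> 'm::finite list \<Rightarrow> 'k::finite \<Rightarrow> real) \<Rightarrow> real" where
  "multi_use_expectation N P n g =
     (\<Sum>cs\<in>{cs. length cs = n \<and> (\<forall>c\<in>set cs. c \<in> tuples N)}. \<Sum>ms\<in>{ms. length ms = n}. \<Sum>k\<in>UNIV.
        prod_list (map (prodP P) cs) * prod_list (map unif ms) * unif k * g cs ms k)"

lemma sum_prod_list_prodP: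
  fixes P :: "'x::finite \<Rightarrow> real"
  shows "(\<Sum>x\<in>UNIV. P x) = 1 \<Longrightarrow>
   (\<Sum>cs\<in>{cs. length cs = n \<and> (\<forall>c\<in>set cs. c \<in> tuples N)}. prod_list (map (prodP P) cs)) = 1"
  unfolding lists_of_tuples_eq by (simp add: sum_lists_prod_list finite_tuples sum_prodP)

lemma multi_use_expectation_term_le:
  assumes "\<forall>x. 0 \<le> P x" "\<And>cs ms k. length cs = n \<Longrightarrow> length ms = n \<Longrightarrow> 0 \<le> g cs ms k"
    and "length cs = n" "set cs \<subseteq> tuples N" "length ms = n"
  shows "prod_list (map (prodP P) cs) * prod_list (map unif ms) * unif k * g cs ms k
         \<le> multi_use_expectation N P n g"
  unfolding multi_use_expectation_def lists_of_tuples_eq using assms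
  by (intro member_le_sum3 finite_lists_length_eq finite_tuples finite_lists_of_length finite_UNIV
      mult_nonneg_nonneg prod_list_nonneg less_imp_le[OF unif_pos])
    (auto intro: prodP_nonneg less_imp_le[OF unif_pos])

lemma multi_use_expectation_sum_nth:
  fixes h :: "'x::finite list \<Rightarrow> 'm::finite \<Rightarrow> 'k::finite \<Rightarrow> real"
  assumes "(\<Sum>x\<in>UNIV. P x) = 1"
  shows "multi_use_expectation N P n (\<lambda>cs ms k. \<Sum>i<n. h (cs ! i) (ms ! i) k)
       = real n * single_use_expectation N P h"
proof -
  define CS where "CS = {cs :: 'x list list. length cs = n \<and> (\<forall>c\<in>set cs. c \<in> tuples N)}"
  define MS where "MS = {ms::'m list. length ms = n}"
  have ms_marginal: "(\<Sum>ms\<in>MS. prod_list (map unif ms) * G (ms ! i)) = (\<Sum>m\<in>UNIV. unif m * G m)"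
    if "i < n" for i and G :: "'m \<Rightarrow> real"
    using sum_lists_prod_list_mult_nth[of UNIV i n unif G] that by (simp add: MS_def sum_unif)
  have cs_marginal:
      "(\<Sum>cs\<in>CS. prod_list (map (prodP P) cs) * G (cs ! i)) = (\<Sum>c\<in>tuples N. prodP P c * G c)"
    if "i < n" for i and G :: "'x list \<Rightarrow> real"
    using sum_lists_prod_list_mult_nth[OF finite_tuples that, of "prodP P" G] assms
    by (simp add: CS_def lists_of_tuples_eq sum_prodP)
  let ?E = "\<lambda>i. \<Sum>cs\<in>CS. prod_list (map (prodP P) cs) *
    (\<Sum>ms\<in>MS. prod_list (map unif ms) * (\<Sum>k\<in>UNIV. unif k * h (cs ! i) (ms ! i) k))"
  have "multi_use_expectation N P n (\<lambda>cs ms k. \<Sum>i<n. h (cs ! i) (ms ! i) k) = (\<Sum>i<n. ?E i)"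
    by (simp add: multi_use_expectation_def CS_def MS_def sum_distrib_left sum.swap[of _ _ "{..<n}"]
        ac_simps)
  also have "\<dots> = (\<Sum>i<n. single_use_expectation N P h)"
  proof (rule sum.cong[OF refl])
    fix i assume "i \<in> {..<n}"
    then have i: "i < n" by simp
    define G where "G c = (\<Sum>m\<in>UNIV. unif m * (\<Sum>k\<in>UNIV. unif k * h c m k))" for c
    have "(\<Sum>ms\<in>MS. prod_list (map unif ms) * (\<Sum>k\<in>UNIV. unif k * h c (ms ! i) k)) = G c" for c
      unfolding G_def by (rule ms_marginal[OF i])
    then have "?E i = (\<Sum>c\<in>tuples N. prodP P c * G c)"
      by (simp add: cs_marginal[OF i])
    also have "\<dots> = single_use_expectation N P h"
      by (simp add: G_def single_use_expectation_def sum_distrib_left ac_simps)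
    finally show "?E i = single_use_expectation N P h" .
  qed
  finally show ?thesis by simp
qed

section \<open>Decoding and uniqueness of the key\<close>

lemma err_prob_eq_single_use_expectation:
  "err_prob N P f phi = single_use_expectation N P (\<lambda>c m k. if phi (f c m k) k \<noteq> m then 1 else 0)"
  by (simp add: err_prob_def single_use_expectation_def)

lemma err_prob_eq_0_imp_decodes:
  assumes "\<forall>x. 0 \<le> P x" "err_prob N P f phi = 0" "c \<in> tuples N" "0 < prodP P c"
  shows "phi (f c m k) k = m"
proof (rule ccontr)
  assume "phi (f c m k) k \<noteq> m"
  then have "0 < prodP P c * unif m * unif k * (if phi (f c m k) k \<noteq> m then 1 else 0)"
    using assms(4) unif_pos[of m] unif_pos[of k] by simp
  also have "\<dots> \<le> err_prob N P f phi"
    unfolding err_prob_eq_single_use_expectation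
    by (rule single_use_expectation_term_le[OF assms(1) _ assms(3)]) simp
  finally show False using assms(2) by simp
qed

lemma key_mem_poss_keys_kc: "length ms = length cs \<Longrightarrow> k \<in> poss_keys_kc f cs (stegos f cs ms k)"
  by (auto simp: poss_keys_kc_def)

lemma one_le_card_poss_keys_kc:
  assumes "length ms = length cs"
  shows "1 \<le> card (poss_keys_kc f cs (stegos f cs ms (k::'k::finite)))"
proof -
  have "k \<in> poss_keys_kc f cs (stegos f cs ms k)"
    using assms by (rule key_mem_poss_keys_kc)
  then show ?thesis by (metis One_nat_def Suc_leI card_gt_0_iff empty_iff finite)
qed

lemma spurious_kc_eq_multi_use_expectation:
  "spurious_kc N P f n =
     multi_use_expectation N P n (\<lambda>cs ms k. real (card (poss_keys_kc f cs (stegos f cs ms k))) - 1)"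
  by (simp add: spurious_kc_def multi_use_expectation_def)

lemma spurious_kc_eq_0_imp_unique_key:
  assumes "\<forall>x. 0 \<le> P x" "spurious_kc N P f n = 0"
    and "length cs = n" "set cs \<subseteq> tuples N" "0 < prod_list (map (prodP P) cs)" "length ms = n"
  shows "poss_keys_kc f cs (stegos f cs ms k) = {k}"
proof -
  let ?K = "poss_keys_kc f cs (stegos f cs ms k)"
  have "prod_list (map (prodP P) cs) * prod_list (map unif ms) * unif k * (real (card ?K) - 1)
        \<le> spurious_kc N P f n"
    unfolding spurious_kc_eq_multi_use_expectation
    by (rule multi_use_expectation_term_le[OF assms(1) _ assms(3,4,6)])
      (use one_le_card_poss_keys_kc in fastforce)
  then have "prod_list (map (prodP P) cs) * prod_list (map unif ms) * unif k * (real (card ?K) - 1)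
      \<le> 0"
    using assms(2) by simp
  moreover have "0 < prod_list (map (prodP P) cs) * prod_list (map unif ms) * unif k"
    using assms(5) unif_pos[of k] by (simp add: prod_list_map_unif)
  ultimately have "card ?K \<le> 1"
    by (metis mult_le_0_iff not_le of_nat_le_iff of_nat_1 diff_le_0_iff_le)
  moreover have "k \<in> ?K"
    using assms(3,6) by (simp add: key_mem_poss_keys_kc)
  ultimately show ?thesis
    using card_le_Suc0_iff_eq[of ?K] by auto
qed

lemma inj_on_stegos:
  assumes unique: "\<And>ms k. length ms = length cs \<Longrightarrow> poss_keys_kc f cs (stegos f cs ms k) = {k}"
    and decodes: "\<And>c m k. c \<in> set cs \<Longrightarrow> phi (f c m k) k = m"
  shows "inj_on (\<lambda>(ms, k). stegos f cs ms k) ({ms. length ms = length cs} \<times> UNIV)"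
proof (rule inj_onI, clarsimp)
  fix ms k ms' k'
  assume len: "length ms = length cs" "length ms' = length cs"
    and eq: "stegos f cs ms k = stegos f cs ms' k'"
  have "k' \<in> poss_keys_kc f cs (stegos f cs ms k)"
    using key_mem_poss_keys_kc[OF len(2)] eq by simp
  then have "k' = k" using unique[OF len(1)] by simp
  have "ms ! i = ms' ! i" if "i < length cs" for i
  proof -
    have "f (cs ! i) (ms ! i) k = f (cs ! i) (ms' ! i) k"
      using arg_cong[OF eq, of "\<lambda>ss. ss ! i"] \<open>k' = k\<close> that len by (simp add: stegos_def)
    then show ?thesis using decodes[of "cs ! i"] that by (metis nth_mem)
  qed
  with len \<open>k' = k\<close> show "ms = ms' \<and> k = k'" by (simp add: nth_equalityI)
qed

lemma inj_on_stegos_of_err_prob_spurious_kc_eq_0: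
  assumes "\<forall>x. 0 \<le> P x" "err_prob N P f phi = 0" "spurious_kc N P f n = 0"
    and "length cs = n" "set cs \<subseteq> tuples N" "0 < prod_list (map (prodP P) cs)"
  shows "inj_on (\<lambda>(ms, k). stegos f cs ms k) ({ms. length ms = n} \<times> UNIV)"
proof -
  have "inj_on (\<lambda>(ms, k). stegos f cs ms k) ({ms. length ms = length cs} \<times> UNIV)"
  proof (rule inj_on_stegos)
    show "poss_keys_kc f cs (stegos f cs ms k) = {k}" if "length ms = length cs" for ms k
      using spurious_kc_eq_0_imp_unique_key[OF assms(1,3-6)] that assms(4) by simp
    show "phi (f c m k) k = m" if "c \<in> set cs" for c m k
      using err_prob_eq_0_imp_decodes[OF assms(1,2)] prodP_pos_of_prod_list_pos[OF assms(1,6)]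
        assms(5) that by blast
  qed
  then show ?thesis using assms(4) by simp
qed

section \<open>The averaged letter channel\<close>

definition channel :: "('a \<Rightarrow> 'b::finite \<Rightarrow> real) \<Rightarrow> bool" where
  "channel q \<longleftrightarrow> (\<forall>a b. 0 \<le> q a b) \<and> (\<forall>a. (\<Sum>b\<in>UNIV. q a b) = 1)"

lemma cond_entropy_le_hiding_capacity:
  assumes "\<forall>x. 0 \<le> P x" "q \<in> admissible P d D"
  shows "cond_entropy P q \<le> hiding_capacity P d D"
  unfolding hiding_capacity_def
proof (rule cSUP_upper[OF assms(2)], rule bdd_aboveI2)
  fix q assume "q \<in> admissible P d D"
  then have "0 \<le> q a b" for a b by (simp add: admissible_def)
  then have "- (P a * q a b * log 2 (q a b)) \<le> P a / ln 2" for a b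
    using neg_mult_ln_le_one[of "q a b"] mult_left_mono[OF _ assms(1)[rule_format, of a]]
    by (fastforce simp: log_def field_simps)
  then show "cond_entropy P q \<le> (\<Sum>a\<in>UNIV. \<Sum>b\<in>(UNIV :: 'a set). P a / ln 2)"
    unfolding cond_entropy_def sum_negf[symmetric] by (intro sum_mono)
qed

(* The joint law of cover letter and stego letter at a position drawn uniformly from the N positions
   of one use. *)
definition letter_joint ::
  "nat \<Rightarrow> ('x::finite \<Rightarrow> real) \<Rightarrow> ('x list \<Rightarrow> 'm::finite \<Rightarrow> 'k::finite \<Rightarrow> 'x list) \<Rightarrow> 'x \<Rightarrow> 'x \<Rightarrow> real" where
  "letter_joint N P f a b =
     single_use_expectation N P (\<lambda>c m k. real (card {j\<in>{..<N}. c ! j = a \<and> f c m k ! j = b}))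
     / real N"

(* Rows with P a = 0 never matter; unif only makes them distributions. *)
definition letter_channel ::
  "nat \<Rightarrow> ('x::finite \<Rightarrow> real) \<Rightarrow> ('x list \<Rightarrow> 'm::finite \<Rightarrow> 'k::finite \<Rightarrow> 'x list) \<Rightarrow> 'x \<Rightarrow> 'x \<Rightarrow> real" where
  "letter_channel N P f a b = (if 0 < P a then letter_joint N P f a b / P a else unif b)"

lemma sum_mult_letter_joint:
  "(\<Sum>a\<in>UNIV. \<Sum>b\<in>UNIV. G a b * letter_joint N P f a b)
   = single_use_expectation N P (\<lambda>c m k. \<Sum>j<N. G (c ! j) (f c m k ! j)) / real N"
proof -
  have "single_use_expectation N P (\<lambda>c m k. \<Sum>j<N. G (c ! j) (f c m k ! j))
      = single_use_expectation N P (\<lambda>c m k. \<Sum>a\<in>UNIV. \<Sum>b\<in>UNIV.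
          G a b * real (card {j\<in>{..<N}. c ! j = a \<and> f c m k ! j = b}))"
  proof -
    have "(\<Sum>j<N. G (c ! j) (f c m k ! j))
        = (\<Sum>a\<in>UNIV. \<Sum>b\<in>UNIV. G a b * real (card {j\<in>{..<N}. c ! j = a \<and> f c m k ! j = b}))"
      for c m k
      by (rule sum_mult_card_pairs[symmetric]) simp
    then show ?thesis by simp
  qed
  also have "\<dots> = (\<Sum>a\<in>UNIV. \<Sum>b\<in>UNIV. G a b *
      single_use_expectation N P (\<lambda>c m k. real (card {j\<in>{..<N}. c ! j = a \<and> f c m k ! j = b})))"
    by (simp add: single_use_expectation_sum single_use_expectation_cmult)
  finally show ?thesis
    by (simp add: letter_joint_def sum_divide_distrib)
qed

lemma letter_joint_nonneg: "\<forall>x. 0 \<le> P x \<Longrightarrow> 0 \<le> letter_joint N P f a b"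
  unfolding letter_joint_def by (simp add: single_use_expectation_nonneg)

lemma sum_letter_joint:
  fixes f :: "'x::finite list \<Rightarrow> 'm::finite \<Rightarrow> 'k::finite \<Rightarrow> 'x list"
  assumes "0 < N" "(\<Sum>x\<in>UNIV. P x) = 1"
  shows "(\<Sum>b\<in>UNIV. letter_joint N P f a b) = P a"
proof -
  have "(\<Sum>a'\<in>UNIV. \<Sum>b\<in>UNIV. of_bool (a' = a) * letter_joint N P f a' b)
      = (\<Sum>a'\<in>UNIV. if a' = a then (\<Sum>b\<in>UNIV. letter_joint N P f a' b) else 0)"
    by (intro sum.cong) auto
  then have "(\<Sum>b\<in>UNIV. letter_joint N P f a b)
      = (\<Sum>a'\<in>UNIV. \<Sum>b\<in>UNIV. of_bool (a' = a) * letter_joint N P f a' b)"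
    by simp
  also have "\<dots> = single_use_expectation N P (\<lambda>c (m::'m) (k::'k). \<Sum>j<N. of_bool (c ! j = a))
      / real N"
    using sum_mult_letter_joint[of "\<lambda>a' b. of_bool (a' = a)" N P f] by simp
  also have "\<dots> = (\<Sum>j<N. \<Sum>c\<in>tuples N. prodP P c * of_bool (c ! j = a)) / real N"
    by (simp add: single_use_expectation_cover sum_distrib_left sum.swap[of _ "tuples N"]
        del: sum_of_bool_eq)
  also have "\<dots> = P a"
  proof -
    have "(\<Sum>c\<in>tuples N. prodP P c * of_bool (c ! j = a)) = P a" if "j < N" for j
      using sum_prodP_mult_nth[OF assms(2) that, of "\<lambda>x. of_bool (x = a)"] by simp
    then show ?thesis using assms(1) by simp
  qed
  finally show ?thesis .
qed

lemma letter_joint_eq_mult_letter_channel: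
  assumes "0 < N" "\<forall>x. 0 \<le> P x" "(\<Sum>x\<in>UNIV. P x) = 1"
  shows "letter_joint N P f a b = P a * letter_channel N P f a b"
proof (cases "P a = 0")
  case True
  then have "(\<Sum>b\<in>UNIV. letter_joint N P f a b) = 0"
    using assms by (simp add: sum_letter_joint)
  then have "letter_joint N P f a b = 0"
    using assms(2) by (simp add: sum_nonneg_eq_0_iff letter_joint_nonneg)
  with True show ?thesis by simp
next
  case False
  then show ?thesis using assms(2) by (simp add: letter_channel_def order_less_le)
qed

lemma channel_letter_channel:
  assumes "0 < N" "\<forall>x. 0 \<le> P x" "(\<Sum>x\<in>UNIV. P x) = 1"
  shows "channel (letter_channel N P f)"
  unfolding channel_def
proof (intro conjI allI)
  fix a b
  show "0 \<le> letter_channel N P f a b"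
    using assms(2) by (simp add: letter_channel_def letter_joint_nonneg less_imp_le[OF unif_pos])
  show "(\<Sum>b\<in>UNIV. letter_channel N P f a b) = 1"
    using assms
    by (cases "0 < P a")
      (simp_all add: letter_channel_def sum_divide_distrib[symmetric] sum_letter_joint sum_unif)
qed

lemma letter_channel_pos:
  assumes "\<forall>x. 0 \<le> P x" "c \<in> tuples N" "0 < prodP P c" "j < N"
  shows "0 < letter_channel N P f (c ! j) (f c m k ! j)"
proof -
  let ?J = "\<lambda>c m k. real (card {i\<in>{..<N}. c ! i = c ! j \<and> f c m k ! i = f c m k ! j})"
  have "0 < P (c ! j)"
    using prodP_pos_nth[OF assms(1,3)] assms(2,4) by (simp add: tuples_def)
  have "j \<in> {i\<in>{..<N}. c ! i = c ! j \<and> f c m k ! i = f c m k ! j}"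
    using assms(4) by simp
  then have "0 < ?J c m k"
    by (auto simp: card_gt_0_iff)
  then have "0 < prodP P c * unif m * unif k * ?J c m k"
    using assms(3) unif_pos[of m] unif_pos[of k] by simp
  also have "\<dots> \<le> single_use_expectation N P (\<lambda>c' m' k'.
      real (card {i\<in>{..<N}. c' ! i = c ! j \<and> f c' m' k' ! i = f c m k ! j}))"
    by (rule single_use_expectation_term_le[OF assms(1) _ assms(2)]) simp
  finally have "0 < letter_joint N P f (c ! j) (f c m k ! j)"
    using assms(4) by (simp add: letter_joint_def)
  with \<open>0 < P (c ! j)\<close> show ?thesis by (simp add: letter_channel_def)
qed

lemma letter_channel_admissible:
  assumes "0 < N" "\<forall>x. 0 \<le> P x" "(\<Sum>x\<in>UNIV. P x) = 1" "avg_distortion N P d f \<le> D"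
  shows "letter_channel N P f \<in> admissible P d D"
proof -
  have "(\<Sum>a\<in>UNIV. \<Sum>b\<in>UNIV. d a b * letter_channel N P f a b * P a)
      = (\<Sum>a\<in>UNIV. \<Sum>b\<in>UNIV. d a b * letter_joint N P f a b)"
    using assms(1-3) by (simp add: letter_joint_eq_mult_letter_channel ac_simps)
  also have "\<dots> = single_use_expectation N P (\<lambda>c m k. \<Sum>j<N. d (c ! j) (f c m k ! j)) / real N"
    by (rule sum_mult_letter_joint)
  also have "\<dots> = avg_distortion N P d f"
  proof -
    have "avg_distortion N P d f = single_use_expectation N P (\<lambda>c m k. distN d c (f c m k))"
      by (simp add: avg_distortion_def single_use_expectation_def)
    also have "\<dots> = single_use_expectation N P (\<lambda>c m k. (\<Sum>j<N. d (c ! j) (f c m k ! j)) / real N)"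
      by (rule single_use_expectation_cong) (simp add: distN_def tuples_def)
    finally show ?thesis
      by (simp add: single_use_expectation_cmult[of _ _ "1 / real N", simplified])
  qed
  finally show ?thesis
    using assms channel_letter_channel[OF assms(1-3), of f]
    by (simp add: admissible_def channel_def)
qed

lemma single_use_expectation_ln_letter_channel:
  assumes "0 < N" "\<forall>x. 0 \<le> P x" "(\<Sum>x\<in>UNIV. P x) = 1"
  shows "single_use_expectation N P (\<lambda>c m k. \<Sum>j<N. ln (letter_channel N P f (c ! j) (f c m k ! j)))
       = - real N * ln 2 * cond_entropy P (letter_channel N P f)"
proof -
  let ?q = "letter_channel N P f"
  have "single_use_expectation N P (\<lambda>c m k. \<Sum>j<N. ln (?q (c ! j) (f c m k ! j)))
      = real N * (\<Sum>a\<in>UNIV. \<Sum>b\<in>UNIV. ln (?q a b) * letter_joint N P f a b)"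
    using assms(1) by (simp add: sum_mult_letter_joint)
  also have "\<dots> = - real N * ln 2 * cond_entropy P ?q"
    using assms by (simp add: letter_joint_eq_mult_letter_channel cond_entropy_def log_def
        sum_distrib_left sum_negf ac_simps)
  finally show ?thesis .
qed

section \<open>The converse bound\<close>

lemma sum_channel_tuple:
  assumes "channel q"
  shows "(\<Sum>y\<in>tuples N. \<Prod>j<N. q (c ! j) (y ! j)) = 1"
  using sum_lists_prod_nth[where A=UNIV and n=N and F="\<lambda>j. q (c ! j)"] assms
  by (simp add: tuples_def channel_def)

lemma stegos_mem_lists_of_tuples:
  assumes "\<forall>c m k. length c = N \<longrightarrow> length (f c m k) = N"
    and "length cs = n" "set cs \<subseteq> tuples N" "length ms = n"
  shows "stegos f cs ms k \<in> {ys. set ys \<subseteq> tuples N \<and> length ys = n}"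
  using assms by (fastforce simp: stegos_def tuples_def set_zip subset_iff)

lemma sum_ln_channel_stegos_le:
  fixes q :: "'x::finite \<Rightarrow> 'x \<Rightarrow> real" and f :: "'x list \<Rightarrow> 'm::finite \<Rightarrow> 'k::finite \<Rightarrow> 'x list"
  assumes q: "channel q"
    and flen: "\<forall>c m k. length c = N \<longrightarrow> length (f c m k) = N"
    and cs: "length cs = n" "set cs \<subseteq> tuples N"
    and pos: "\<And>i j m k. i < n \<Longrightarrow> j < N \<Longrightarrow> 0 < q (cs ! i ! j) (f (cs ! i) m k ! j)"
    and inj: "inj_on (\<lambda>(ms, k). stegos f cs ms k) ({ms. length ms = n} \<times> UNIV)"
  shows "(\<Sum>ms\<in>{ms. length ms = n}. \<Sum>k\<in>UNIV. \<Sum>i<n. \<Sum>j<N.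
            ln (q (cs ! i ! j) (f (cs ! i) (ms ! i) k ! j)))
         \<le> - real (CARD('m) ^ n * CARD('k)) * ln (real (CARD('m) ^ n * CARD('k)))"
proof -
  define Z where "Z = {ms::'m list. length ms = n} \<times> (UNIV :: 'k set)"
  define Y where "Y = {ys :: 'x list list. set ys \<subseteq> tuples N \<and> length ys = n}"
  define r where "r ys = (\<Prod>i<n. \<Prod>j<N. q (cs ! i ! j) (ys ! i ! j))" for ys
  define p where "p z = (\<Prod>i<n. \<Prod>j<N. q (cs ! i ! j) (f (cs ! i) (fst z ! i) (snd z) ! j))" for z
  let ?g = "\<lambda>(ms, k). stegos f cs ms k"
  have finite_Z: "finite Z" and card_Z: "card Z = CARD('m) ^ n * CARD('k)"
    using finite_lists_length_eq[of "UNIV :: 'm set" n] card_lists_length_eq[of "UNIV :: 'm set" n]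
    by (simp_all add: Z_def card_cartesian_product)
  have "sum r Y = (\<Prod>i<n. \<Sum>y\<in>tuples N. \<Prod>j<N. q (cs ! i ! j) (y ! j))"
    unfolding Y_def r_def by (rule sum_lists_prod_nth[OF finite_tuples])
  then have sum_r: "sum r Y = 1"
    using sum_channel_tuple[OF q] by simp
  have g_Z: "?g ` Z \<subseteq> Y"
    using stegos_mem_lists_of_tuples[OF flen cs] by (auto simp: Z_def Y_def)
  have r_g: "r (?g z) = p z" if "z \<in> Z" for z
    using that cs(1) by (auto simp: Z_def r_def p_def stegos_def intro!: prod.cong)
  have "sum p Z = sum r (?g ` Z)"
    using r_g by (simp add: sum.reindex[OF inj[folded Z_def]])
  also have "\<dots> \<le> sum r Y"
    using g_Z q by (intro sum_mono2) (auto simp: Y_def finite_lists_length_eq finite_tuples r_def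
        channel_def prod_nonneg)
  finally have "sum p Z \<le> 1" using sum_r by simp
  moreover have "0 < p z" for z
    unfolding p_def by (intro prod_pos) (simp add: pos)
  ultimately have gibbs: "(\<Sum>z\<in>Z. ln (p z)) \<le> - real (card Z) * ln (real (card Z))"
    by (intro gibbs_inequality_uniform finite_Z)
  define F where "F ms k = (\<Sum>i<n. \<Sum>j<N. ln (q (cs ! i ! j) (f (cs ! i) (ms ! i) k ! j)))" for ms k
  have "ln (p z) = F (fst z) (snd z)" for z
    unfolding p_def F_def by (intro ln_prod_prod) (simp_all add: pos)
  moreover have "(\<Sum>ms\<in>{ms. length ms = n}. \<Sum>k\<in>UNIV. F ms k) = (\<Sum>z\<in>Z. F (fst z) (snd z))"
    unfolding Z_def sum.cartesian_product by (simp add: case_prod_beta)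
  ultimately show ?thesis
    using gibbs by (simp add: F_def card_Z)
qed

lemma average_ln_channel_stegos_le:
  fixes q :: "'x::finite \<Rightarrow> 'x \<Rightarrow> real" and f :: "'x list \<Rightarrow> 'm::finite \<Rightarrow> 'k::finite \<Rightarrow> 'x list"
  assumes "channel q"
    and "\<forall>c m k. length c = N \<longrightarrow> length (f c m k) = N"
    and "length cs = n" "set cs \<subseteq> tuples N"
    and "\<And>i j m k. i < n \<Longrightarrow> j < N \<Longrightarrow> 0 < q (cs ! i ! j) (f (cs ! i) m k ! j)"
    and "inj_on (\<lambda>(ms, k). stegos f cs ms k) ({ms. length ms = n} \<times> UNIV)"
  shows "(\<Sum>ms\<in>{ms. length ms = n}. \<Sum>k\<in>UNIV. prod_list (map unif ms) * unif k *
           (\<Sum>i<n. \<Sum>j<N. ln (q (cs ! i ! j) (f (cs ! i) (ms ! i) k ! j))))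
         \<le> - ln (real (CARD('m) ^ n * CARD('k)))"
proof -
  define W where "W = real (CARD('m) ^ n * CARD('k))"
  have "0 < W" by (simp add: W_def)
  have "(\<Sum>ms\<in>{ms. length ms = n}. \<Sum>k\<in>UNIV. prod_list (map unif ms) * unif k *
          (\<Sum>i<n. \<Sum>j<N. ln (q (cs ! i ! j) (f (cs ! i) (ms ! i) k ! j))))
      = (\<Sum>ms\<in>{ms. length ms = n}. \<Sum>k\<in>UNIV. \<Sum>i<n. \<Sum>j<N.
           ln (q (cs ! i ! j) (f (cs ! i) (ms ! i) k ! j))) / W"
    by (simp add: prod_list_map_unif unif_def W_def sum_divide_distrib)
  also have "\<dots> \<le> (- W * ln W) / W"
    using sum_ln_channel_stegos_le[OF assms] \<open>0 < W\<close> unfolding W_def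
    by (intro divide_right_mono) simp_all
  finally show ?thesis
    using \<open>0 < W\<close> by (simp add: W_def)
qed

lemma log_card_messages_keys_le:
  fixes f :: "'x::finite list \<Rightarrow> 'm::finite \<Rightarrow> 'k::finite \<Rightarrow> 'x list"
  assumes "0 < N" "\<forall>x. 0 \<le> P x" "(\<Sum>x\<in>UNIV. P x) = 1"
    and flen: "\<forall>c m k. length c = N \<longrightarrow> length (f c m k) = N"
    and inj: "\<And>cs. length cs = n \<Longrightarrow> set cs \<subseteq> tuples N \<Longrightarrow> 0 < prod_list (map (prodP P) cs) \<Longrightarrow>
                inj_on (\<lambda>(ms, k). stegos f cs ms k) ({ms. length ms = n} \<times> UNIV)"
  shows "real n * log 2 CARD('m) + log 2 CARD('k)
         \<le> real n * real N * cond_entropy P (letter_channel N P f)"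
proof -
  define q where "q = letter_channel N P f"
  define W where "W = real (CARD('m) ^ n * CARD('k))"
  define h where "h c m k = (\<Sum>j<N. ln (q (c ! j) (f c m k ! j)))" for c m k
  have "channel q"
    unfolding q_def by (rule channel_letter_channel[OF assms(1-3)])
  have per_covers: "prod_list (map (prodP P) cs) *
      (\<Sum>ms\<in>{ms. length ms = n}. \<Sum>k\<in>UNIV.
         prod_list (map unif ms) * unif k * (\<Sum>i<n. h (cs ! i) (ms ! i) k))
      \<le> prod_list (map (prodP P) cs) * - ln W" if "set cs \<subseteq> tuples N" "length cs = n" for cs
  proof (cases "0 < prod_list (map (prodP P) cs)")
    case True
    have "0 < q (cs ! i ! j) (f (cs ! i) m k ! j)" if "i < n" "j < N" for i j m k
      unfolding q_def using \<open>set cs \<subseteq> tuples N\<close> \<open>length cs = n\<close> \<open>i < n\<close> True assms(2)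
      by (intro letter_channel_pos[OF assms(2) _ _ \<open>j < N\<close>])
        (auto intro: prodP_pos_of_prod_list_pos)
    from average_ln_channel_stegos_le[OF \<open>channel q\<close> flen that(2,1) this inj[OF that(2,1) True]]
    show ?thesis
      using True by (intro mult_left_mono) (simp_all add: h_def W_def)
  qed (use prod_list_prodP_nonneg[OF assms(2), of cs] in simp)
  have "single_use_expectation N P h = - real N * ln 2 * cond_entropy P q"
    unfolding h_def q_def by (rule single_use_expectation_ln_letter_channel[OF assms(1-3)])
  then have "- real n * real N * ln 2 * cond_entropy P q
      = multi_use_expectation N P n (\<lambda>cs ms k. \<Sum>i<n. h (cs ! i) (ms ! i) k)"
    by (simp add: multi_use_expectation_sum_nth[OF assms(3), where h=h])
  also have "\<dots> \<le> (\<Sum>cs\<in>{cs. length cs = n \<and> (\<forall>c\<in>set cs. c \<in> tuples N)}.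
      prod_list (map (prodP P) cs) * - ln W)"
    unfolding multi_use_expectation_def using per_covers
    by (intro sum_mono) (auto simp: sum_distrib_left mult.assoc)
  also have "\<dots> = - ln W"
    using assms(3) by (simp add: sum_negf sum_distrib_right[symmetric] sum_prod_list_prodP)
  finally have "log 2 W \<le> real n * real N * cond_entropy P q"
    by (simp add: log_def field_simps)
  then show ?thesis
    by (simp add: W_def q_def log_mult_pos log_nat_power)
qed

section \<open>Stego-only attacks\<close>

lemma poss_keys_kc_subset_poss_keys_so:
  assumes "length ms = length cs" "\<And>c. c \<in> set cs \<Longrightarrow> c \<in> tuples N \<and> 0 < prodP P c"
  shows "poss_keys_kc f cs (stegos f cs ms k) \<subseteq> poss_keys_so N P f (stegos f cs ms k)"
proof
  fix k' assume "k' \<in> poss_keys_kc f cs (stegos f cs ms k)"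
  then obtain ms' where "length ms' = length cs" "stegos f cs ms' k' = stegos f cs ms k"
    by (auto simp: poss_keys_kc_def)
  then show "k' \<in> poss_keys_so N P f (stegos f cs ms k)"
    unfolding poss_keys_so_def using assms
    by (auto simp: stegos_def tuples_def intro!: exI[of _ cs] exI[of _ ms'])
qed

lemma spurious_so_eq_multi_use_expectation:
  "spurious_so N P f n =
     multi_use_expectation N P n
       (\<lambda>cs ms k. real (card (poss_keys_so N P f (stegos f cs ms k))) - 1)"
  by (simp add: spurious_so_def multi_use_expectation_def)

lemma
  assumes "\<forall>x. 0 \<le> P x"
  shows spurious_kc_nonneg: "0 \<le> spurious_kc N P f n"
    and spurious_kc_le_spurious_so: "spurious_kc N P f n \<le> spurious_so N P f n"
proof -
  let ?w = "\<lambda>cs ms k. prod_list (map (prodP P) cs) * prod_list (map unif ms) * unif k"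
  let ?kc = "\<lambda>cs ms k. real (card (poss_keys_kc f cs (stegos f cs ms k))) - 1"
  let ?so = "\<lambda>cs ms k. real (card (poss_keys_so N P f (stegos f cs ms k))) - 1"
  have termwise:
      "0 \<le> ?w cs ms k * ?kc cs ms k \<and> ?w cs ms k * ?kc cs ms k \<le> ?w cs ms k * ?so cs ms k"
    if "set cs \<subseteq> tuples N" "length ms = length cs" for cs ms k
  proof (cases "0 < prod_list (map (prodP P) cs)")
    case True
    then have "poss_keys_kc f cs (stegos f cs ms k) \<subseteq> poss_keys_so N P f (stegos f cs ms k)"
      using that assms
      by (intro poss_keys_kc_subset_poss_keys_so) (auto intro: prodP_pos_of_prod_list_pos)
    then have "?kc cs ms k \<le> ?so cs ms k"
      by (simp add: card_mono)
    moreover have "0 \<le> ?kc cs ms k"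
      using one_le_card_poss_keys_kc[OF that(2)] by simp
    moreover have "0 \<le> ?w cs ms k"
      using True unif_pos[of k] by (simp add: prod_list_map_unif)
    ultimately show ?thesis by (simp add: mult_left_mono)
  next
    case False
    then show ?thesis using prod_list_prodP_nonneg[OF assms, of cs] by simp
  qed
  show "0 \<le> spurious_kc N P f n"
    unfolding spurious_kc_eq_multi_use_expectation multi_use_expectation_def
    using termwise by (auto intro!: sum_nonneg simp: subset_iff)
  show "spurious_kc N P f n \<le> spurious_so N P f n"
    unfolding spurious_kc_eq_multi_use_expectation spurious_so_eq_multi_use_expectation
      multi_use_expectation_def
    using termwise by (auto intro!: sum_mono simp: subset_iff)
qed

lemma unicity_kc_le_unicity_so:
  assumes "\<forall>x. 0 \<le> P x" "\<exists>n. spurious_so N P f n = 0"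
  shows "unicity_kc N P f \<le> unicity_so N P f"
proof -
  have "spurious_so N P f (unicity_so N P f) = 0"
    unfolding unicity_so_def using assms(2) by (rule LeastI_ex)
  then have "spurious_kc N P f (unicity_so N P f) = 0"
    using spurious_kc_nonneg[OF assms(1), of N f "unicity_so N P f"]
      spurious_kc_le_spurious_so[OF assms(1), of N f "unicity_so N P f"] by linarith
  then show ?thesis
    unfolding unicity_kc_def by (rule Least_le)
qed

theorem corollary1:
  fixes N :: nat
    and P :: "'x::finite \<Rightarrow> real"
    and d :: "'x \<Rightarrow> 'x \<Rightarrow> real"
    and D :: real
    and f :: "'x list \<Rightarrow> 'm::finite \<Rightarrow> 'k::finite \<Rightarrow> 'x list"
    and phi :: "'x list \<Rightarrow> 'k \<Rightarrow> 'm"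
    and \<epsilon> :: real
  assumes "N > 0"
    and "\<forall>x. 0 \<le> P x" and "(\<Sum>x\<in>UNIV. P x) = 1"
    and "\<forall>x y. 0 \<le> d x y"
    and "stego_code N P d D f phi"
    and "\<forall>\<delta>>0. err_prob N P f phi \<le> \<delta>"
    and "\<epsilon> > 0"
    and "\<exists>n. spurious_kc N P f n = 0"
  shows "real (unicity_kc N P f) \<ge>
           (entropy (unif :: 'k \<Rightarrow> real) UNIV / real N) /
           (hiding_capacity P d D - entropy (unif :: 'm \<Rightarrow> real) UNIV / real N + \<epsilon>)
         \<and> ((\<exists>n. spurious_so N P f n = 0) \<longrightarrow> unicity_so N P f \<ge> unicity_kc N P f)"
proof -
  define n where "n = unicity_kc N P f"
  have flen: "\<forall>c m k. length c = N \<longrightarrow> length (f c m k) = N"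
    and distortion: "avg_distortion N P d f \<le> D"
    using assms(5) by (simp_all add: stego_code_def)
  have "0 \<le> err_prob N P f phi"
    by (simp add: err_prob_eq_single_use_expectation single_use_expectation_nonneg assms(2))
  moreover have "err_prob N P f phi \<le> 0"
    by (rule field_le_epsilon) (use assms(6) in simp)
  ultimately have "err_prob N P f phi = 0" by simp
  moreover have "spurious_kc N P f n = 0"
    unfolding n_def unicity_kc_def using assms(8) by (rule LeastI_ex)
  ultimately have "real n * log 2 CARD('m) + log 2 CARD('k)
      \<le> real n * real N * cond_entropy P (letter_channel N P f)"
    using log_card_messages_keys_le[OF assms(1-3) flen]
      inj_on_stegos_of_err_prob_spurious_kc_eq_0[OF assms(2)] by blast
  also have "\<dots> \<le> real n * real N * hiding_capacity P d D"
    using cond_entropy_le_hiding_capacity[OF assms(2)]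
      letter_channel_admissible[OF assms(1-3) distortion] by (simp add: mult_left_mono)
  finally have "(log 2 CARD('k) / real N) / (hiding_capacity P d D - log 2 CARD('m) / real N + \<epsilon>)
      \<le> real n"
    using assms(1,7) by (intro rate_ratio_le) simp_all
  then show ?thesis
    using unicity_kc_le_unicity_so[OF assms(2), of N f] by (simp add: entropy_unif n_def)
qed

end
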